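(* Let $G$ be a finite simple undirected graph whose VC-dimension is $d$. Then for every simple coalition game $\mathcal G$ over $G$, $\dfrac{\kappa(\mathcal G)}{\rho(\mathcal G)}\le d+1$.
   Context: Coalition game over $G=(V,E)$: a valuation $v:2^V\to\mathbb Z_{\ge 0}$ with $v(\emptyset)=0$, $v(S)=0$ whenever $G[S]$ is disconnected, and $v$ not identically zero; it is simple if $v(S)\in\{0,1\}$ for all $S$. $\kappa(\mathcal G)=\min\{\sum_{i\in V}x_i: x\in\mathbb Z_{\ge0}^V,\ \sum_{i\in S}x_i\ge v(S)\ \forall S\subseteq V\}$; $\rho(\mathcal G)$ is the maximum of $\sum_{S\in\mathcal P}v(S)$ over families $\mathcal P$ of pairwise disjoint subsets of $V$. A set $X\subseteq V$ is shattered by a family $\mathcal R$ of subsets of $V$ if for every $Y\subseteq X$ there is $R\in\mathcal R$ with $R\cap X=Y$; the VC-dimension of $\mathcal R$ is the maximum size of a shattered set. The VC-dimension of the graph $G$ is the VC-dimension of the family of all nonempty $S\subseteq V$ such that $G[S]$ is connected. *)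

theory Defs
  imports "HOL-Analysis.Analysis"
begin

definition simple_graph :: "'a set \<Rightarrow> ('a \<times> 'a) set \<Rightarrow> bool" where
  "simple_graph V E \<longleftrightarrow> finite V \<and> E \<subseteq> V \<times> V \<and> sym E \<and> irrefl E"

definition induced_connected :: "('a \<times> 'a) set \<Rightarrow> 'a set \<Rightarrow> bool" where
  "induced_connected E S \<longleftrightarrow> S \<noteq> {} \<and> (\<forall>x\<in>S. \<forall>y\<in>S. (x, y) \<in> (E \<inter> (S \<times> S))\<^sup>*)"

definition coalition_game :: "'a set \<Rightarrow> ('a \<times> 'a) set \<Rightarrow> ('a set \<Rightarrow> nat) \<Rightarrow> bool" where
  "coalition_game V E v \<longleftrightarrow> v {} = 0
     \<and> (\<forall>S. S \<subseteq> V \<longrightarrow> S \<noteq> {} \<longrightarrow> \<not> induced_connected E S \<longrightarrow> v S = 0)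
     \<and> (\<exists>S. S \<subseteq> V \<and> v S \<noteq> 0)"

definition simple_game :: "'a set \<Rightarrow> ('a set \<Rightarrow> nat) \<Rightarrow> bool" where
  "simple_game V v \<longleftrightarrow> (\<forall>S. S \<subseteq> V \<longrightarrow> v S \<in> {0, 1})"

definition kappa :: "'a set \<Rightarrow> ('a set \<Rightarrow> nat) \<Rightarrow> nat" where
  "kappa V v = Inf {sum x V | x :: 'a \<Rightarrow> nat. \<forall>S. S \<subseteq> V \<longrightarrow> sum x S \<ge> v S}"

definition rho :: "'a set \<Rightarrow> ('a set \<Rightarrow> nat) \<Rightarrow> nat" where
  "rho V v = Max {sum v P | P. P \<subseteq> Pow V \<and> disjoint P}"

definition shatters :: "'a set set \<Rightarrow> 'a set \<Rightarrow> bool" where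
  "shatters R X \<longleftrightarrow> (\<forall>Y. Y \<subseteq> X \<longrightarrow> (\<exists>A\<in>R. A \<inter> X = Y))"

definition vc_dim :: "'a set \<Rightarrow> 'a set set \<Rightarrow> nat" where
  "vc_dim V R = Max {card X | X. X \<subseteq> V \<and> shatters R X}"

definition graph_vc_dim :: "'a set \<Rightarrow> ('a \<times> 'a) set \<Rightarrow> nat" where
  "graph_vc_dim V E = vc_dim V {S. S \<subseteq> V \<and> induced_connected E S}"

end

theory Submission
  imports Defs
begin

text \<open>Let \<open>F\<close> be the winning coalitions; they are connected. It suffices to find
  a set \<open>T\<close> meeting every member of \<open>F\<close> together with a disjoint subfamily \<open>P\<close> of \<open>F\<close>
  with \<open>|T| \<le> (d + 1) |P|\<close>: the indicator of \<open>T\<close> is a feasible allocation and \<open>P\<close> a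
  feasible packing. Greedily, it is enough to find in every nonempty \<open>F\<close> a member \<open>S\<close> and a
  set \<open>H\<close> of at most \<open>d + 1\<close> vertices such that every member of \<open>F\<close> avoiding \<open>H\<close> also
  avoids \<open>S\<close>. Fix a vertex \<open>r\<close> of some member and take \<open>S\<close> among the members not
  containing \<open>r\<close> (but in the component of \<open>r\<close>) such that the component \<open>C\<close> of \<open>r\<close> in
  \<open>G - S\<close> is largest. Let \<open>B\<close> be the vertices of \<open>S\<close> adjacent to \<open>C\<close>; for every
  \<open>Y \<subseteq> B\<close> the set \<open>Y \<union> C\<close> is connected, so \<open>B\<close> is shattered and \<open>|B| \<le> d\<close>. With
  \<open>H = B \<union> {r}\<close>, a connected member avoiding \<open>H\<close> but meeting \<open>S\<close> cannot meet \<open>C\<close>, so the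
  component of \<open>r\<close> outside it contains \<open>C \<union> B\<close>, contradicting the maximality of \<open>C\<close>.\<close>

definition reach_within :: "('a \<times> 'a) set \<Rightarrow> 'a set \<Rightarrow> 'a \<Rightarrow> 'a set" where
  "reach_within E U r = {x. (r, x) \<in> (E \<inter> U \<times> U)\<^sup>*}"

definition boundary :: "('a \<times> 'a) set \<Rightarrow> 'a set \<Rightarrow> 'a set \<Rightarrow> 'a set" where
  "boundary E S C = {s \<in> S. \<exists>c \<in> C. (s, c) \<in> E}"

lemma start_in_reach_within: "r \<in> reach_within E U r"
  by (simp add: reach_within_def)

lemma reach_within_subset:
  assumes "r \<in> U"
  shows "reach_within E U r \<subseteq> U"
proof
  fix x assume "x \<in> reach_within E U r"
  then have "(r, x) \<in> (E \<inter> U \<times> U)\<^sup>*" by (simp add: reach_within_def)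
  then show "x \<in> U" using assms by (induction rule: rtrancl_induct) auto
qed

lemma reach_within_step:
  assumes "x \<in> reach_within E U r" "(x, y) \<in> E" "x \<in> U" "y \<in> U"
  shows "y \<in> reach_within E U r"
  using assms by (auto simp: reach_within_def intro: rtrancl_into_rtrancl)

lemma reach_within_path_inside:
  assumes "x \<in> reach_within E U r"
  shows "(r, x) \<in> (E \<inter> reach_within E U r \<times> reach_within E U r)\<^sup>*"
proof -
  have "(r, x) \<in> (E \<inter> U \<times> U)\<^sup>*" using assms by (simp add: reach_within_def)
  then show ?thesis
  proof (induction rule: rtrancl_induct)
    case (step y z)
    then have "y \<in> reach_within E U r" "z \<in> reach_within E U r"
      by (auto simp: reach_within_def intro: rtrancl_into_rtrancl)
    with step show ?case by (auto intro: rtrancl_into_rtrancl)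
  qed simp
qed

lemma reach_within_subset_reach_within:
  assumes "reach_within E U r \<subseteq> U'"
  shows "reach_within E U r \<subseteq> reach_within E U' r"
proof
  fix x assume "x \<in> reach_within E U r"
  then have "(r, x) \<in> (E \<inter> reach_within E U r \<times> reach_within E U r)\<^sup>*"
    by (rule reach_within_path_inside)
  moreover have "(E \<inter> reach_within E U r \<times> reach_within E U r)\<^sup>* \<subseteq> (E \<inter> U' \<times> U')\<^sup>*"
    using assms by (intro rtrancl_mono) auto
  ultimately show "x \<in> reach_within E U' r" by (auto simp: reach_within_def)
qed

lemma rtrancl_exit_edge:
  assumes "(x, y) \<in> R\<^sup>*" "x \<in> A" "y \<notin> A"
  obtains a b where "(a, b) \<in> R" "a \<in> A" "b \<notin> A"
  using assms by (induction rule: rtrancl_induct) auto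

lemma induced_connected_if_reachable_from:
  assumes "sym E" "r \<in> A" "\<forall>x\<in>A. (r, x) \<in> (E \<inter> A \<times> A)\<^sup>*"
  shows "induced_connected E A"
  unfolding induced_connected_def
proof (intro conjI ballI)
  show "A \<noteq> {}" using assms(2) by auto
next
  fix x y assume "x \<in> A" "y \<in> A"
  have "sym ((E \<inter> A \<times> A)\<^sup>*)"
    using assms(1) by (intro sym_rtrancl) (auto simp: sym_def)
  then have "(x, r) \<in> (E \<inter> A \<times> A)\<^sup>*" "(r, y) \<in> (E \<inter> A \<times> A)\<^sup>*"
    using assms(3) \<open>x \<in> A\<close> \<open>y \<in> A\<close> by (auto dest: symD)
  then show "(x, y) \<in> (E \<inter> A \<times> A)\<^sup>*" by (rule rtrancl_trans)
qed

lemma induced_connected_subset_reach_within: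
  assumes "induced_connected E W" "W \<subseteq> U" "W \<inter> reach_within E U r \<noteq> {}"
  shows "W \<subseteq> reach_within E U r"
proof
  fix x assume "x \<in> W"
  obtain w where w: "w \<in> W" "w \<in> reach_within E U r" using assms(3) by blast
  have "(w, x) \<in> (E \<inter> W \<times> W)\<^sup>*"
    using assms(1) w(1) \<open>x \<in> W\<close> by (auto simp: induced_connected_def)
  moreover have "(E \<inter> W \<times> W)\<^sup>* \<subseteq> (E \<inter> U \<times> U)\<^sup>*"
    using assms(2) by (intro rtrancl_mono) auto
  ultimately show "x \<in> reach_within E U r"
    using w(2) by (auto simp: reach_within_def)
qed

lemma card_le_vc_dim:
  assumes "finite V" "X \<subseteq> V" "shatters R X"
  shows "card X \<le> vc_dim V R"
proof -
  have "{card X |X. X \<subseteq> V \<and> shatters R X} \<subseteq> card ` Pow V" by auto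
  then have "finite {card X |X. X \<subseteq> V \<and> shatters R X}"
    using assms(1) by (meson finite_Pow_iff finite_imageI finite_subset)
  then show ?thesis
    unfolding vc_dim_def by (rule Max_ge) (use assms in blast)
qed

lemma shatters_boundary_reach_within:
  assumes G: "simple_graph V E" and "S \<subseteq> V" and r: "r \<in> V - S"
  shows "shatters {A. A \<subseteq> V \<and> induced_connected E A}
           (boundary E S (reach_within E (V - S) r))"
  unfolding shatters_def
proof (intro allI impI)
  define C where "C = reach_within E (V - S) r"
  fix Y assume Y: "Y \<subseteq> boundary E S (reach_within E (V - S) r)"
  have symE: "sym E" using G by (simp add: simple_graph_def)
  have CVS: "C \<subseteq> V - S" unfolding C_def by (rule reach_within_subset[OF r])
  have reach_C: "(r, c) \<in> (E \<inter> (Y \<union> C) \<times> (Y \<union> C))\<^sup>*" if "c \<in> C" for c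
  proof -
    have "(r, c) \<in> (E \<inter> C \<times> C)\<^sup>*"
      using reach_within_path_inside that by (fastforce simp: C_def)
    moreover have "(E \<inter> C \<times> C)\<^sup>* \<subseteq> (E \<inter> (Y \<union> C) \<times> (Y \<union> C))\<^sup>*"
      by (intro rtrancl_mono) auto
    ultimately show ?thesis by blast
  qed
  have reach_all: "\<forall>x \<in> Y \<union> C. (r, x) \<in> (E \<inter> (Y \<union> C) \<times> (Y \<union> C))\<^sup>*"
  proof
    fix x assume x: "x \<in> Y \<union> C"
    show "(r, x) \<in> (E \<inter> (Y \<union> C) \<times> (Y \<union> C))\<^sup>*"
    proof (cases "x \<in> C")
      case False
      with x Y obtain c where "c \<in> C" "(x, c) \<in> E" "x \<in> Y"
        by (auto simp: boundary_def C_def)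
      then show ?thesis
        using reach_C symE by (blast dest: symD intro: rtrancl_into_rtrancl)
    qed (rule reach_C)
  qed
  have "r \<in> Y \<union> C" using start_in_reach_within[of r E "V - S"] by (simp add: C_def)
  then have "induced_connected E (Y \<union> C)"
    by (rule induced_connected_if_reachable_from[OF symE _ reach_all])
  moreover have "Y \<union> C \<subseteq> V" using Y CVS \<open>S \<subseteq> V\<close> by (auto simp: boundary_def C_def)
  moreover have "(Y \<union> C) \<inter> boundary E S C = Y" using Y CVS by (auto simp: boundary_def C_def)
  ultimately show "\<exists>A \<in> {A. A \<subseteq> V \<and> induced_connected E A}.
      A \<inter> boundary E S (reach_within E (V - S) r) = Y"
    unfolding C_def by blast
qed

lemma card_boundary_le_graph_vc_dim:
  assumes G: "simple_graph V E" and "S \<subseteq> V" and "r \<in> V - S"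
  shows "card (boundary E S (reach_within E (V - S) r)) \<le> graph_vc_dim V E"
proof -
  have "boundary E S (reach_within E (V - S) r) \<subseteq> V"
    using assms(2) by (auto simp: boundary_def)
  then show ?thesis
    unfolding graph_vc_dim_def
    using G assms shatters_boundary_reach_within
    by (intro card_le_vc_dim) (simp_all add: simple_graph_def)
qed

lemma edge_leaving_reach_within_into_boundary:
  assumes G: "simple_graph V E" and r: "r \<in> V - S"
    and a: "a \<in> reach_within E (V - S) r" and ab: "(a, b) \<in> E"
    and b: "b \<notin> reach_within E (V - S) r"
  shows "b \<in> boundary E S (reach_within E (V - S) r)"
proof -
  have "a \<in> V - S" using reach_within_subset[OF r] a by blast
  moreover have "b \<in> V" "(b, a) \<in> E" using G ab by (auto simp: simple_graph_def dest: symD)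
  ultimately show ?thesis
    using reach_within_step[OF a ab] a b by (auto simp: boundary_def)
qed

lemma boundary_reach_within_nonempty:
  assumes G: "simple_graph V E" and r: "r \<in> V - S"
    and "s \<in> S" "s \<in> reach_within E V r"
  shows "boundary E S (reach_within E (V - S) r) \<noteq> {}"
proof -
  have "(r, s) \<in> (E \<inter> V \<times> V)\<^sup>*" using assms(4) by (simp add: reach_within_def)
  moreover have "s \<notin> reach_within E (V - S) r"
    using reach_within_subset[OF r] \<open>s \<in> S\<close> by blast
  ultimately obtain a b where "(a, b) \<in> E \<inter> V \<times> V" "a \<in> reach_within E (V - S) r"
      "b \<notin> reach_within E (V - S) r"
    by (rule rtrancl_exit_edge[OF _ start_in_reach_within])
  then have "b \<in> boundary E S (reach_within E (V - S) r)"
    by (intro edge_leaving_reach_within_into_boundary[OF G r]) auto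
  then show ?thesis by blast
qed

lemma disjoint_reach_within_if_avoiding_boundary:
  assumes G: "simple_graph V E" and r: "r \<in> V - S"
    and W: "induced_connected E W" "W \<inter> S \<noteq> {}"
    and "W \<inter> boundary E S (reach_within E (V - S) r) = {}"
  shows "W \<inter> reach_within E (V - S) r = {}"
proof (rule ccontr)
  assume "W \<inter> reach_within E (V - S) r \<noteq> {}"
  then obtain c where c: "c \<in> W" "c \<in> reach_within E (V - S) r" by blast
  obtain w where w: "w \<in> W" "w \<in> S" using W(2) by blast
  have "(c, w) \<in> (E \<inter> W \<times> W)\<^sup>*" using W(1) c w by (auto simp: induced_connected_def)
  moreover have "w \<notin> reach_within E (V - S) r" using reach_within_subset[OF r] w by blast
  ultimately obtain a b where "(a, b) \<in> E \<inter> W \<times> W" "a \<in> reach_within E (V - S) r"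
      "b \<notin> reach_within E (V - S) r"
    by (rule rtrancl_exit_edge[OF _ c(2)])
  then have "b \<in> W \<inter> boundary E S (reach_within E (V - S) r)"
    using edge_leaving_reach_within_into_boundary[OF G r] by auto
  with assms(5) show False by blast
qed

lemma reach_within_psubset_avoiding_boundary:
  assumes G: "simple_graph V E" and "S \<subseteq> V" and r: "r \<in> V - S"
    and W: "induced_connected E W" "W \<subseteq> V" "r \<notin> W" "W \<inter> S \<noteq> {}"
    and WB: "W \<inter> boundary E S (reach_within E (V - S) r) = {}"
    and Bne: "boundary E S (reach_within E (V - S) r) \<noteq> {}"
  shows "reach_within E (V - S) r \<subset> reach_within E (V - W) r"
proof -
  define C where "C = reach_within E (V - S) r"
  have CVS: "C \<subseteq> V - S" unfolding C_def by (rule reach_within_subset[OF r])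
  have "W \<inter> C = {}"
    unfolding C_def by (rule disjoint_reach_within_if_avoiding_boundary[OF G r W(1,4) WB])
  then have CW: "C \<subseteq> reach_within E (V - W) r"
    unfolding C_def using CVS by (intro reach_within_subset_reach_within) (auto simp: C_def)
  have "boundary E S C \<subseteq> reach_within E (V - W) r"
  proof
    fix b assume b: "b \<in> boundary E S C"
    then obtain c where c: "c \<in> C" "(c, b) \<in> E"
      using G by (auto simp: boundary_def simple_graph_def dest: symD)
    have "b \<in> V - W" using b WB \<open>S \<subseteq> V\<close> by (auto simp: boundary_def C_def)
    moreover have "c \<in> V - W" using c(1) CVS \<open>W \<inter> C = {}\<close> by blast
    ultimately show "b \<in> reach_within E (V - W) r"
      using reach_within_step[of c E "V - W" r b] CW c by blast
  qed
  moreover obtain b where "b \<in> boundary E S C" using Bne by (auto simp: C_def)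
  moreover have "boundary E S C \<inter> C = {}" using CVS by (auto simp: boundary_def)
  ultimately show ?thesis using CW by (auto simp: C_def)
qed

lemma card_reach_within_less_if_avoiding_boundary:
  assumes G: "simple_graph V E" and r: "r \<in> V - S"
    and S: "S \<subseteq> V" "S \<inter> reach_within E V r \<noteq> {}"
    and W: "induced_connected E W" "W \<subseteq> V" "W \<inter> S \<noteq> {}"
    and WH: "W \<inter> insert r (boundary E S (reach_within E (V - S) r)) = {}"
  shows "card (reach_within E (V - S) r) < card (reach_within E (V - W) r)"
proof -
  have rW: "r \<notin> W" and WB: "W \<inter> boundary E S (reach_within E (V - S) r) = {}"
    using WH by auto
  obtain s where s: "s \<in> S" "s \<in> reach_within E V r" using S(2) by blast
  have "reach_within E (V - S) r \<subset> reach_within E (V - W) r"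
    using reach_within_psubset_avoiding_boundary[OF G S(1) r W(1,2) rW W(3) WB]
      boundary_reach_within_nonempty[OF G r s] .
  moreover have "finite (reach_within E (V - W) r)"
    using reach_within_subset[of r "V - W" E] r rW G by (auto simp: simple_graph_def intro: finite_subset)
  ultimately show ?thesis by (rule psubset_card_mono[rotated])
qed

lemma exists_small_blocker:
  assumes G: "simple_graph V E" and F: "\<forall>W\<in>F. W \<subseteq> V \<and> induced_connected E W" "F \<noteq> {}"
  obtains S H where "S \<in> F" "H \<subseteq> V" "card H \<le> graph_vc_dim V E + 1"
    "\<forall>W\<in>F. W \<inter> H = {} \<longrightarrow> W \<inter> S = {}"
proof -
  obtain S0 r where S0: "S0 \<in> F" "r \<in> S0"
    using F by (fastforce simp: induced_connected_def)
  have rV: "r \<in> V" using F S0 by blast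
  define candidate where "candidate W \<longleftrightarrow> W \<in> F \<and> r \<notin> W \<and> W \<inter> reach_within E V r \<noteq> {}" for W
  have S0_reach: "S0 \<subseteq> reach_within E V r"
    using F S0 start_in_reach_within[of r E V] by (intro induced_connected_subset_reach_within) auto
  show thesis
  proof (cases "\<exists>W. candidate W")
    case False
    then have "\<forall>W\<in>F. W \<inter> {r} = {} \<longrightarrow> W \<inter> S0 = {}"
      using S0_reach by (auto simp: candidate_def)
    with S0 rV show thesis by (intro that[of S0 "{r}"]) auto
  next
    case True
    have "card (reach_within E (V - W) r) < card V + 1" if "candidate W" for W
    proof -
      have "reach_within E (V - W) r \<subseteq> V" using that rV reach_within_subset[of r "V - W"]
        by (auto simp: candidate_def)
      then show ?thesis using G by (auto simp: simple_graph_def intro: card_mono le_imp_less_Suc)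
    qed
    then obtain S where S: "candidate S"
      and S_max: "\<forall>W. candidate W \<longrightarrow> card (reach_within E (V - W) r) \<le> card (reach_within E (V - S) r)"
      using True ex_has_greatest_nat[of candidate _ "\<lambda>W. card (reach_within E (V - W) r)"]
      by blast
    define H where "H = insert r (boundary E S (reach_within E (V - S) r))"
    have SV: "S \<subseteq> V" and rS: "r \<in> V - S" using S F rV by (auto simp: candidate_def)
    have "finite (boundary E S (reach_within E (V - S) r))"
      using G SV by (auto simp: simple_graph_def boundary_def intro: finite_subset)
    then have "card H \<le> card (boundary E S (reach_within E (V - S) r)) + 1"
      by (simp add: H_def card_insert_if)
    then have "card H \<le> graph_vc_dim V E + 1"
      using card_boundary_le_graph_vc_dim[OF G SV rS] by linarith
    moreover have "W \<inter> S = {}" if W: "W \<in> F" "W \<inter> H = {}" for W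
    proof (rule ccontr)
      assume WS: "W \<inter> S \<noteq> {}"
      have SF: "S \<in> F" and S_reach: "S \<inter> reach_within E V r \<noteq> {}"
        using S by (simp_all add: candidate_def)
      have W_conn: "induced_connected E W" "W \<subseteq> V" using F W(1) by auto
      have "S \<subseteq> reach_within E V r"
        using F SF S_reach by (intro induced_connected_subset_reach_within) auto
      then have "candidate W" using W WS by (auto simp: candidate_def H_def)
      moreover have "card (reach_within E (V - S) r) < card (reach_within E (V - W) r)"
        using W(2) unfolding H_def
        by (rule card_reach_within_less_if_avoiding_boundary[OF G rS SV S_reach W_conn WS])
      ultimately show False using S_max by (meson not_le)
    qed
    moreover have "H \<subseteq> V" using SV rV by (auto simp: H_def boundary_def)
    ultimately show thesis using S by (intro that[of S H]) (auto simp: candidate_def)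
  qed
qed

text \<open>The greedy step: pick \<open>S\<close> with its blocker \<open>H\<close>, put \<open>S\<close> into the packing and \<open>H\<close>
  into the hitting set, and recurse on the members avoiding \<open>H\<close>, which all avoid \<open>S\<close>.\<close>

lemma exists_hitting_set_and_packing:
  fixes F :: "'a set set" and k :: nat
  assumes "finite F" "\<forall>W\<in>F. W \<noteq> {}"
    and "\<And>F'. F' \<subseteq> F \<Longrightarrow> F' \<noteq> {} \<Longrightarrow>
      \<exists>S H. S \<in> F' \<and> H \<subseteq> X \<and> card H \<le> k \<and> (\<forall>W\<in>F'. W \<inter> H = {} \<longrightarrow> W \<inter> S = {})"
  shows "\<exists>T P. T \<subseteq> X \<and> P \<subseteq> F \<and> disjoint P \<and> (\<forall>W\<in>F. W \<inter> T \<noteq> {}) \<and> card T \<le> k * card P"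
  using assms
proof (induction F rule: finite_psubset_induct)
  case (psubset F)
  show ?case
  proof (cases "F = {}")
    case False
    obtain S H where S: "S \<in> F" and H: "H \<subseteq> X" "card H \<le> k"
      and blocks: "\<forall>W\<in>F. W \<inter> H = {} \<longrightarrow> W \<inter> S = {}"
      using psubset.prems(2)[OF order.refl False] by blast
    define F' where "F' = {W \<in> F. W \<inter> H = {}}"
    have "S \<notin> F'" using blocks S psubset.prems(1) by (auto simp: F'_def)
    then have "F' \<subset> F" using S by (auto simp: F'_def)
    have "\<exists>T P. T \<subseteq> X \<and> P \<subseteq> F' \<and> disjoint P \<and> (\<forall>W\<in>F'. W \<inter> T \<noteq> {}) \<and> card T \<le> k * card P"
    proof (rule psubset.IH[OF \<open>F' \<subset> F\<close>])
      show "\<forall>W\<in>F'. W \<noteq> {}" using psubset.prems(1) by (simp add: F'_def)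
    next
      fix F'' assume "F'' \<subseteq> F'" "F'' \<noteq> {}"
      moreover have "F' \<subseteq> F" using \<open>F' \<subset> F\<close> by (rule psubset_imp_subset)
      ultimately show "\<exists>S H. S \<in> F'' \<and> H \<subseteq> X \<and> card H \<le> k \<and> (\<forall>W\<in>F''. W \<inter> H = {} \<longrightarrow> W \<inter> S = {})"
        by (intro psubset.prems(2)) auto
    qed
    then obtain T P where T: "T \<subseteq> X" "\<forall>W\<in>F'. W \<inter> T \<noteq> {}" "card T \<le> k * card P"
      and P: "P \<subseteq> F'" "disjoint P"
      by blast
    have finP: "finite P"
      using P(1) \<open>F' \<subset> F\<close> psubset.hyps by (meson finite_subset psubset_imp_subset)
    have "S \<notin> P" using P(1) \<open>S \<notin> F'\<close> by blast
    have "\<forall>W\<in>P. W \<inter> S = {}" using P(1) blocks unfolding F'_def by blast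
    then have "disjoint (insert S P)"
      using P(2) by (auto simp: pairwise_insert disjnt_def)
    moreover have "card (T \<union> H) \<le> k * card (insert S P)"
    proof -
      have "card (T \<union> H) \<le> card T + card H" by (rule card_Un_le)
      also have "\<dots> \<le> k * card P + k" using T(3) H(2) by simp
      also have "\<dots> = k * card (insert S P)" using finP \<open>S \<notin> P\<close> by simp
      finally show ?thesis .
    qed
    moreover have "\<forall>W\<in>F. W \<inter> (T \<union> H) \<noteq> {}" using T(2) by (auto simp: F'_def)
    moreover have "T \<union> H \<subseteq> X" "insert S P \<subseteq> F" using T(1) H(1) S P(1) by (auto simp: F'_def)
    ultimately show ?thesis by blast
  qed (intro exI[of _ "{}"], simp)
qed

lemma kappa_le_card_hitting_set:
  assumes "finite V" "T \<subseteq> V" "simple_game V v" and hits: "\<forall>S. S \<subseteq> V \<and> v S = 1 \<longrightarrow> S \<inter> T \<noteq> {}"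
  shows "kappa V v \<le> card T"
proof -
  define x where "x i = (if i \<in> T then 1 else 0 :: nat)" for i
  have sum_x: "sum x S = card (S \<inter> T)" if "finite S" for S
    using that unfolding x_def by (simp add: sum.If_cases)
  have "v S \<le> sum x S" if "S \<subseteq> V" for S
  proof -
    have "finite S" using that assms(1) by (rule finite_subset)
    moreover have "v S = 0 \<or> (v S = 1 \<and> S \<inter> T \<noteq> {})"
      using assms(3) hits that by (auto simp: simple_game_def)
    ultimately show ?thesis by (auto simp: sum_x Suc_le_eq card_gt_0_iff)
  qed
  then have "kappa V v \<le> sum x V"
    unfolding kappa_def by (intro cInf_lower) (auto intro: bdd_belowI[of _ 0])
  also have "sum x V = card T" using sum_x[OF assms(1)] assms(2) by (simp add: Int_absorb1)
  finally show ?thesis .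
qed

lemma sum_le_rho:
  assumes "finite V" "P \<subseteq> Pow V" "disjoint P"
  shows "sum v P \<le> rho V v"
proof -
  have "{sum v P | P. P \<subseteq> Pow V \<and> disjoint P} \<subseteq> sum v ` Pow (Pow V)" by auto
  then have "finite {sum v P | P. P \<subseteq> Pow V \<and> disjoint P}"
    using assms(1) by (meson finite_Pow_iff finite_imageI finite_subset)
  then show ?thesis unfolding rho_def by (rule Max_ge) (use assms in blast)
qed

theorem theorem4p2:
  fixes V :: "'a set" and E :: "('a \<times> 'a) set" and v :: "'a set \<Rightarrow> nat" and d :: nat
  assumes "simple_graph V E"
    and "graph_vc_dim V E = d"
    and "coalition_game V E v"
    and "simple_game V v"
  shows "real (kappa V v) / real (rho V v) \<le> real d + 1"
proof -
  define F where "F = {S. S \<subseteq> V \<and> v S = 1}"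
  have finV: "finite V" using assms(1) by (simp add: simple_graph_def)
  have finF: "finite F" using finV by (auto simp: F_def intro: finite_subset[of F "Pow V"])
  have conn: "\<forall>W\<in>F. W \<subseteq> V \<and> induced_connected E W"
    using assms(3) by (auto simp: F_def coalition_game_def)
  have nonempty: "\<forall>W\<in>F. W \<noteq> {}" using conn by (simp add: induced_connected_def)
  have blocker: "\<exists>S H. S \<in> F' \<and> H \<subseteq> V \<and> card H \<le> d + 1 \<and> (\<forall>W\<in>F'. W \<inter> H = {} \<longrightarrow> W \<inter> S = {})"
    if F'_sub: "F' \<subseteq> F" and F'_ne: "F' \<noteq> {}" for F'
  proof -
    have "\<forall>W\<in>F'. W \<subseteq> V \<and> induced_connected E W" using conn F'_sub by blast
    then obtain S H where "S \<in> F'" "H \<subseteq> V" "card H \<le> graph_vc_dim V E + 1"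
        "\<forall>W\<in>F'. W \<inter> H = {} \<longrightarrow> W \<inter> S = {}"
      using F'_ne by (rule exists_small_blocker[OF assms(1)])
    then show ?thesis using assms(2) by blast
  qed
  obtain T P where T: "T \<subseteq> V" "\<forall>W\<in>F. W \<inter> T \<noteq> {}" "card T \<le> (d + 1) * card P"
    and P: "P \<subseteq> F" "disjoint P"
    using exists_hitting_set_and_packing[OF finF nonempty blocker] by blast
  have "kappa V v \<le> card T"
    using T(1,2) by (intro kappa_le_card_hitting_set[OF finV _ assms(4)]) (auto simp: F_def)
  also have "\<dots> \<le> (d + 1) * card P" by (rule T(3))
  also have "\<dots> \<le> (d + 1) * rho V v"
  proof -
    have "card P = (\<Sum>W\<in>P. 1)" by simp
    also have "\<dots> = sum v P" using P(1) by (intro sum.cong) (auto simp: F_def)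
    also have "\<dots> \<le> rho V v" using P by (intro sum_le_rho[OF finV]) (auto simp: F_def)
    finally show ?thesis by (rule mult_le_mono2)
  qed
  finally have "real (kappa V v) \<le> (real d + 1) * real (rho V v)"
    by (metis of_nat_Suc of_nat_mono of_nat_mult Suc_eq_plus1 add.commute)
  moreover have "rho V v > 0"
  proof -
    obtain S where "S \<subseteq> V" "v S \<noteq> 0" using assms(3) by (auto simp: coalition_game_def)
    then show ?thesis using sum_le_rho[OF finV, of "{S}" v] by simp
  qed
  ultimately show ?thesis by (simp add: divide_le_eq)
qed

end
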